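(* Let $\rho>0$, $\sigma^2>0$, $M_R\le M_T$, let $\mathbf g\in\mathbb C^{M_R}$, $\mathbf h\in\mathbb C^{M_T}$ have unit-modulus entries, $\mathbf H=\mathbf g\mathbf h^T$, $\mathrm{vec}(\mathbf\Phi)\sim\mathcal N(\mathbf 0,\sigma^2\mathbf I_{M_TM_R})$ real, $\hat{\mathbf H}=\mathbf H\circ(\mathbf 1+j\mathbf\Phi)$ and $\hat C=\mathbb E\{\log_2\det(\mathbf I_{M_R}+\frac{\rho}{M_T}\hat{\mathbf H}\hat{\mathbf H}^H)\}$. Then $$\hat C\le\log_2\Big(1+\sum_{n=1}^{M_R}\Big(\frac{\rho}{M_T}\Big)^n(\sigma^2)^n\binom{M_R}{n}\binom{M_T}{n}n!\Big(1+\frac{n}{\sigma^2}\Big)\Big).$$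
   Context: $\circ$ is the Hadamard product and $\mathbf 1$ the all-ones $M_R\times M_T$ matrix. *)

theory Defs
  imports "HOL-Probability.Probability" "Jordan_Normal_Form.Determinant"
begin

definition Hhat :: "nat \<Rightarrow> nat \<Rightarrow> (nat \<Rightarrow> complex) \<Rightarrow> (nat \<Rightarrow> complex)
    \<Rightarrow> (nat \<times> nat \<Rightarrow> real) \<Rightarrow> complex mat" where
  "Hhat MR MT g h Phi = mat MR MT (\<lambda>(i,j). (g i * h j) * (1 + \<i> * complex_of_real (Phi (i,j))))"

definition herm :: "complex mat \<Rightarrow> complex mat" where
  "herm A = mat (dim_col A) (dim_row A) (\<lambda>(i,j). cnj (A $$ (j,i)))"

definition Phi_dist :: "real \<Rightarrow> nat \<Rightarrow> nat \<Rightarrow> (nat \<times> nat \<Rightarrow> real) measure" where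
  "Phi_dist s2 MR MT = PiM ({0..<MR} \<times> {0..<MT}) (\<lambda>_. density lborel (normal_density 0 (sqrt s2)))"

text \<open>Capacity log2 det(I + rho/MT Hhat Hhat^H); the determinant is real, we take its real part.\<close>
definition cap_integrand :: "real \<Rightarrow> nat \<Rightarrow> nat \<Rightarrow> (nat \<Rightarrow> complex) \<Rightarrow> (nat \<Rightarrow> complex)
    \<Rightarrow> (nat \<times> nat \<Rightarrow> real) \<Rightarrow> real" where
  "cap_integrand rho MR MT g h Phi =
     log 2 (Re (det (1\<^sub>m MR + complex_of_real (rho / real MT) \<cdot>\<^sub>m
                      (Hhat MR MT g h Phi * herm (Hhat MR MT g h Phi)))))"

end

theory Submission
  imports Defs "Jordan_Normal_Form.Char_Poly"
begin

(* Write Hhat = H o (1 + j Phi) and P(Phi) = I + c Hhat Hhat^H with c = rho / M_T.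
   The proof computes E[det P] in closed form and then applies Jensen's inequality
   to the concave function log2, using det P >= 1:

     1. Leibniz expansion (perm_det): det P is a sum over row subsets V and
        permutations p of V of products of Gram entries; expanding the Gram products
        gives a sum over label maps f : V -> {0..<M_T}.
     2. In each product the unit-modulus phases of g and h cancel, leaving a product
        of the Gaussian noise factors 1 + j Phi(r,l).
     3. The rows of Phi are independent, and for two entries x, y of one row
        E[(1 + j x)(1 - j y)] is 1 + sigma^2 if they are the same entry and 1
        otherwise. So the expectation of each product is a "label kernel" that
        only depends on which labels coincide.
     4. A signed permutation sum of this kernel vanishes unless f is injective, and
        equals s^k + k s^(k-1) otherwise; counting subsets and injections gives
        E[det P] = sum_k C(M_R,k) c^k C(M_T,k) k! (s^k + k s^(k-1)).
     5. All eigenvalues of P are real and >= 1, hence det P >= 1, which makes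
        log2 det P integrable and Jensen applicable. *)

(* Working with arbitrary index sets lets us pass to
   principal minors (subsets V of U) without renumbering. *)
definition perm_det :: "'a set \<Rightarrow> ('a \<Rightarrow> 'a \<Rightarrow> 'b::comm_ring_1) \<Rightarrow> 'b" where
  "perm_det U W = (\<Sum>p | p permutes U. of_int (sign p) * (\<Prod>j\<in>U. W j (p j)))"

lemma perm_det_equal_rows:
  fixes W :: "'a \<Rightarrow> 'a \<Rightarrow> 'b::field_char_0"
  assumes U: "finite U" and ab: "a \<in> U" "b \<in> U" "a \<noteq> b" and rows: "W a = W b"
  shows "perm_det U W = 0"
proof -
  let ?t = "Transposition.transpose a b"
  let ?f = "\<lambda>p. of_int (sign p) * (\<Prod>j\<in>U. W j (p j)) :: 'b"
  have t: "?t permutes U" using ab by (intro permutes_swap_id)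
  have "perm_det U W = (\<Sum>p | p permutes U. ?f (p \<circ> ?t))"
    unfolding perm_det_def by (rule sum_permutations_compose_right[OF t])
  also have "\<dots> = (\<Sum>p | p permutes U. - ?f p)"
  proof (rule sum.cong[OF refl])
    fix p assume "p \<in> {p. p permutes U}"
    then have p: "p permutes U" by simp
    have sign: "sign (p \<circ> ?t) = - sign p"
      using p t U ab by (simp add: sign_compose permutes_imp_permutation sign_swap_id)
    have "(\<Prod>j\<in>U. W j ((p \<circ> ?t) j)) = (\<Prod>j\<in>U. W (?t j) (p j))"
      using prod.permute[OF t, of "\<lambda>j. W j ((p \<circ> ?t) j)"] by (simp add: o_def)
    also have "\<dots> = (\<Prod>j\<in>U. W j (p j))"
    proof (rule prod.cong[OF refl])
      fix j
      have "W (?t j) = W j" using rows by (cases "j = a"; cases "j = b") auto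
      then show "W (?t j) (p j) = W j (p j)" by simp
    qed
    finally show "?f (p \<circ> ?t) = - ?f p" using sign by simp
  qed
  also have "\<dots> = - perm_det U W" by (simp add: perm_det_def sum_negf)
  finally show ?thesis by simp
qed

lemma permutes_subset_iff_fixes:
  assumes "V \<subseteq> U"
  shows "(p permutes U \<and> (\<forall>j\<in>U - V. p j = j)) \<longleftrightarrow> p permutes V"
  using assms unfolding permutes_def by blast

(* Expansion of det(W + x I) into principal minors of W: the diagonal term x is
   chosen on the rows outside V, forcing the permutation to fix U - V. *)
lemma perm_det_add_diagonal:
  fixes W :: "'a \<Rightarrow> 'a \<Rightarrow> 'b::comm_ring_1"
  assumes U: "finite U"
  shows "perm_det U (\<lambda>i j. W i j + x * (if i = j then 1 else 0))
    = (\<Sum>V\<in>Pow U. x ^ card (U - V) * perm_det V W)"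
proof -
  let ?diag = "\<lambda>p j. x * (if j = p j then 1 else 0)"
  have "perm_det U (\<lambda>i j. W i j + x * (if i = j then 1 else 0))
      = (\<Sum>p | p permutes U. \<Sum>V\<in>Pow U.
           of_int (sign p) * ((\<Prod>j\<in>V. W j (p j)) * (\<Prod>j\<in>U - V. ?diag p j)))"
    unfolding perm_det_def by (simp add: prod_add[OF U] sum_distrib_left)
  also have "\<dots> = (\<Sum>V\<in>Pow U. \<Sum>p | p permutes U.
           of_int (sign p) * ((\<Prod>j\<in>V. W j (p j)) * (\<Prod>j\<in>U - V. ?diag p j)))"
    by (rule sum.swap)
  also have "\<dots> = (\<Sum>V\<in>Pow U. x ^ card (U - V) * perm_det V W)"
  proof (rule sum.cong[OF refl])
    fix V assume "V \<in> Pow U"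
    then have VU: "V \<subseteq> U" by simp
    let ?fixes = "{p. \<forall>j\<in>U - V. p j = j}"
    have summand: "of_int (sign p) * ((\<Prod>j\<in>V. W j (p j)) * (\<Prod>j\<in>U - V. ?diag p j))
        = (if p \<in> ?fixes then x ^ card (U - V) * (of_int (sign p) * (\<Prod>j\<in>V. W j (p j))) else 0)"
      for p
    proof (cases "p \<in> ?fixes")
      case True
      then have "(\<Prod>j\<in>U - V. ?diag p j) = x ^ card (U - V)" by simp
      then show ?thesis using True by (simp add: ac_simps)
    next
      case False
      then obtain j where j: "j \<in> U - V" "?diag p j = 0" by auto
      then have "(\<Prod>j\<in>U - V. ?diag p j) = 0" using U by (intro prod_zero) blast+
      then show ?thesis using False by auto
    qed
    have "(\<Sum>p | p permutes U. of_int (sign p) * ((\<Prod>j\<in>V. W j (p j)) * (\<Prod>j\<in>U - V. ?diag p j)))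
        = (\<Sum>p \<in> {p. p permutes U} \<inter> ?fixes. x ^ card (U - V) * (of_int (sign p) * (\<Prod>j\<in>V. W j (p j))))"
      unfolding summand by (rule sum.inter_restrict[OF finite_permutations[OF U], symmetric])
    also have "{p. p permutes U} \<inter> ?fixes = {p. p permutes V}"
      using permutes_subset_iff_fixes[OF VU] by blast
    finally show "(\<Sum>p | p permutes U. of_int (sign p) * ((\<Prod>j\<in>V. W j (p j)) * (\<Prod>j\<in>U - V. ?diag p j)))
        = x ^ card (U - V) * perm_det V W"
      by (simp add: perm_det_def sum_distrib_left)
  qed
  finally show ?thesis .
qed

(* det(J + s I) = s^k + k s^(k-1) for the all-ones k x k matrix J: only the minors of J
   of size 0 and 1 are non-zero. *)
lemma perm_det_ones_plus_diagonal:
  fixes s :: "'b::field_char_0"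
  assumes U: "finite U"
  shows "perm_det U (\<lambda>i j. if i = j then 1 + s else 1) = s ^ card U + of_nat (card U) * s ^ (card U - 1)"
proof -
  define summand where "summand V = s ^ card (U - V) * perm_det V (\<lambda>_ _. 1::'b)" for V
  have small: "summand V = 0" if "V \<in> Pow U - insert {} ((\<lambda>a. {a}) ` U)" for V
  proof -
    have V: "finite V" "V \<noteq> {}" "\<And>a. V \<noteq> {a}" using that U finite_subset by auto
    then obtain a b where ab: "a \<in> V" "b \<in> V" "a \<noteq> b"
      by (metis ex_in_conv insertI1 subsetI subset_antisym singletonD)
    have "perm_det V (\<lambda>_ _. 1::'b) = 0" by (rule perm_det_equal_rows[OF V(1) ab]) simp
    then show ?thesis unfolding summand_def by simp
  qed
  have "perm_det U (\<lambda>i j. if i = j then 1 + s else 1)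
      = perm_det U (\<lambda>i j. 1 + s * (if i = j then 1 else 0))"
    by (intro arg_cong2[where f = perm_det] ext) simp_all
  also have "\<dots> = sum summand (Pow U)"
    unfolding summand_def by (rule perm_det_add_diagonal[OF U])
  also have "\<dots> = sum summand (insert {} ((\<lambda>a. {a}) ` U))"
    by (rule sum.mono_neutral_right) (use U small in auto)
  also have "\<dots> = summand {} + (\<Sum>a\<in>U. summand {a})"
    using U by (subst sum.insert) (auto simp: sum.reindex inj_on_def)
  also have "\<dots> = s ^ card U + of_nat (card U) * s ^ (card U - 1)"
    using U by (simp add: summand_def perm_det_def permutes_empty permutes_sing)
  finally show ?thesis .
qed

(* The label kernel K(i,j) = (if f i = f j then 1 + s else 1). If f is injective it is
   J + s I; otherwise two rows coincide. *)
lemma perm_det_label_kernel: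
  fixes s :: "'b::field_char_0"
  assumes V: "finite V"
  shows "perm_det V (\<lambda>i j. if f i = f j then 1 + s else 1)
     = (if inj_on f V then s ^ card V + of_nat (card V) * s ^ (card V - 1) else 0)"
proof (cases "inj_on f V")
  case True
  have "perm_det V (\<lambda>i j. if f i = f j then 1 + s else 1) = perm_det V (\<lambda>i j. if i = j then 1 + s else 1)"
    unfolding perm_det_def
  proof (intro sum.cong refl arg_cong2[where f = "(*)"] prod.cong)
    fix p j assume "p \<in> {p. p permutes V}" and j: "j \<in> V"
    then have "p j \<in> V" by (simp add: permutes_in_image)
    then show "(if f j = f (p j) then 1 + s else 1) = (if j = p j then 1 + s else 1)"
      using True j by (auto dest: inj_onD)
  qed
  then show ?thesis using True perm_det_ones_plus_diagonal[OF V] by simp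
next
  case False
  then obtain a b where ab: "a \<in> V" "b \<in> V" "a \<noteq> b" and "f a = f b"
    by (auto simp: inj_on_def)
  then have "perm_det V (\<lambda>i j. if f i = f j then 1 + s else 1) = 0"
    by (intro perm_det_equal_rows[OF V ab]) (simp add: fun_eq_iff)
  then show ?thesis using False by simp
qed

lemma perm_det_scale:
  assumes "finite V"
  shows "perm_det V (\<lambda>i j. z * W i j) = z ^ card V * perm_det V W"
  unfolding perm_det_def by (simp add: prod.distrib sum_distrib_left ac_simps)

lemma perm_det_gram:
  fixes a b :: "'a \<Rightarrow> 'l \<Rightarrow> 'b::comm_ring_1"
  assumes V: "finite V" and L: "finite L"
  shows "perm_det V (\<lambda>i j. \<Sum>l\<in>L. a i l * b j l)
    = (\<Sum>p | p permutes V. of_int (sign p) * (\<Sum>f\<in>V \<rightarrow>\<^sub>E L. \<Prod>j\<in>V. a j (f j) * b (p j) (f j)))"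
  unfolding perm_det_def using V L by (simp add: prod_sum_PiE)

lemma falling_factorial_eq_choose_fact: "(\<Prod>i = 0..<k. n - i) = (n choose k) * fact k"
proof (cases "k \<le> n")
  case True
  have "real (n choose k) * fact k = (real n gchoose k) * fact k"
    by (simp add: binomial_gbinomial)
  also have "\<dots> = (\<Prod>i = 0..<k. real n - of_nat i)" by (rule gbinomial_mult_fact')
  also have "\<dots> = real (\<Prod>i = 0..<k. n - i)"
    unfolding of_nat_prod using True by (intro prod.cong refl) (simp add: of_nat_diff)
  finally show ?thesis by (metis of_nat_eq_iff of_nat_fact of_nat_mult)
next
  case False
  then have zero: "(\<Prod>i = 0..<k. n - i) = 0" by (intro prod_zero bexI[of _ n]) auto
  show ?thesis unfolding zero using False by simp
qed

lemma card_injections: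
  assumes V: "finite V"
  shows "card {f \<in> V \<rightarrow>\<^sub>E {0..<n::nat}. inj_on f V} = (n choose card V) * fact (card V)"
  using card_inj_on_subset_funcset[OF V, of "{0..<n}" V]
  by (simp add: prod.atLeast0_lessThan_Suc falling_factorial_eq_choose_fact)

lemma sum_Pow_by_card:
  fixes F :: "nat \<Rightarrow> 'b::comm_semiring_1"
  assumes U: "finite U"
  shows "(\<Sum>V\<in>Pow U. F (card V)) = (\<Sum>k=0..card U. of_nat (card U choose k) * F k)"
proof -
  have "(\<Sum>V\<in>Pow U. F (card V)) = (\<Sum>k=0..card U. \<Sum>V | V \<in> Pow U \<and> card V = k. F (card V))"
    by (rule sum.group[symmetric]) (use U in \<open>auto intro: card_mono\<close>)
  also have "\<dots> = (\<Sum>k=0..card U. of_nat (card U choose k) * F k)"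
  proof (rule sum.cong[OF refl])
    fix k
    have "(\<Sum>V | V \<in> Pow U \<and> card V = k. F (card V)) = of_nat (card {V. V \<subseteq> U \<and> card V = k}) * F k"
      by simp
    then show "(\<Sum>V | V \<in> Pow U \<and> card V = k. F (card V)) = of_nat (card U choose k) * F k"
      using n_subsets[OF U, of k] by simp
  qed
  finally show ?thesis .
qed

lemma label_kernel_expansion:
  fixes z s :: "'b::field_char_0"
  shows "(\<Sum>V\<in>Pow {0..<m}. z ^ card V * (\<Sum>p | p permutes V. of_int (sign p) *
           (\<Sum>f\<in>V \<rightarrow>\<^sub>E {0..<n}. \<Prod>j\<in>V. if f j = f (p j) then 1 + s else 1)))
    = (\<Sum>k=0..m. of_nat (m choose k) * z ^ k * of_nat ((n choose k) * fact k)
                 * (s ^ k + of_nat k * s ^ (k - 1)))"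
proof -
  let ?D = "\<lambda>k. s ^ k + of_nat k * s ^ (k - 1)"
  have per_subset: "(\<Sum>p | p permutes V. of_int (sign p) *
           (\<Sum>f\<in>V \<rightarrow>\<^sub>E {0..<n}. \<Prod>j\<in>V. if f j = f (p j) then 1 + s else 1))
      = of_nat ((n choose card V) * fact (card V)) * ?D (card V)" if V: "finite V" for V
  proof -
    have "(\<Sum>p | p permutes V. of_int (sign p) *
           (\<Sum>f\<in>V \<rightarrow>\<^sub>E {0..<n}. \<Prod>j\<in>V. if f j = f (p j) then 1 + s else 1))
        = (\<Sum>f\<in>V \<rightarrow>\<^sub>E {0..<n}. perm_det V (\<lambda>i j. if f i = f j then 1 + s else 1))"
      unfolding perm_det_def sum_distrib_left by (rule sum.swap)
    also have "\<dots> = (\<Sum>f\<in>V \<rightarrow>\<^sub>E {0..<n}. if inj_on f V then ?D (card V) else 0)"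
      by (simp add: perm_det_label_kernel[OF V])
    also have "\<dots> = of_nat (card {f \<in> V \<rightarrow>\<^sub>E {0..<n}. inj_on f V}) * ?D (card V)"
      using V by (simp add: sum.If_cases finite_PiE Int_def conj_commute)
    finally show ?thesis by (simp add: card_injections[OF V])
  qed
  have "(\<Sum>V\<in>Pow {0..<m}. z ^ card V * (\<Sum>p | p permutes V. of_int (sign p) *
           (\<Sum>f\<in>V \<rightarrow>\<^sub>E {0..<n}. \<Prod>j\<in>V. if f j = f (p j) then 1 + s else 1)))
      = (\<Sum>V\<in>Pow {0..<m}. z ^ card V * (of_nat ((n choose card V) * fact (card V)) * ?D (card V)))"
    by (intro sum.cong refl) (auto simp: per_subset finite_subset)
  also have "\<dots> = (\<Sum>k=0..m. of_nat (m choose k) * (z ^ k * (of_nat ((n choose k) * fact k) * ?D k)))"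
    by (subst sum_Pow_by_card) simp_all
  finally show ?thesis by (simp add: mult.assoc)
qed

(* Entries of I + z A A^H for an arbitrary complex m x n matrix A, in the form
   W i j + 1 * delta(i,j) expected by perm_det_add_diagonal. *)
lemma one_plus_gram_entry:
  assumes A: "A \<in> carrier_mat m n" and ij: "i < m" "j < m"
  shows "(1\<^sub>m m + z \<cdot>\<^sub>m (A * herm A)) $$ (i, j)
     = z * (\<Sum>l = 0..<n. A $$ (i, l) * cnj (A $$ (j, l))) + 1 * (if i = j then 1 else 0)"
  using assms by (auto simp: herm_def scalar_prod_def intro!: sum.cong)

lemma det_one_plus_gram:
  assumes A: "A \<in> carrier_mat m n"
  shows "det (1\<^sub>m m + z \<cdot>\<^sub>m (A * herm A))
    = (\<Sum>V\<in>Pow {0..<m}. z ^ card V * (\<Sum>p | p permutes V. of_int (sign p) *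
         (\<Sum>f\<in>V \<rightarrow>\<^sub>E {0..<n}. \<Prod>j\<in>V. A $$ (j, f j) * cnj (A $$ (p j, f j)))))"
proof -
  let ?P = "1\<^sub>m m + z \<cdot>\<^sub>m (A * herm A)"
  let ?G = "\<lambda>i j. \<Sum>l = 0..<n. A $$ (i, l) * cnj (A $$ (j, l))"
  have "?P \<in> carrier_mat m m" using A by (simp add: herm_def)
  then have "det ?P = perm_det {0..<m} (\<lambda>i j. ?P $$ (i, j))"
    unfolding perm_det_def by (rule det_def')
  also have "\<dots> = perm_det {0..<m} (\<lambda>i j. z * ?G i j + 1 * (if i = j then 1 else 0))"
    unfolding perm_det_def
  proof (intro sum.cong refl arg_cong2[where f = "(*)"] prod.cong)
    fix p i assume "p \<in> {p. p permutes {0..<m}}" and i: "i \<in> {0..<m}"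
    then have "p i < m" by (auto dest: permutes_in_image)
    then show "?P $$ (i, p i) = z * ?G i (p i) + 1 * (if i = p i then 1 else 0)"
      using i by (simp add: one_plus_gram_entry[OF A])
  qed
  also have "\<dots> = (\<Sum>V\<in>Pow {0..<m}. perm_det V (\<lambda>i j. z * ?G i j))"
    using perm_det_add_diagonal[of "{0..<m}" "\<lambda>i j. z * ?G i j" 1] by simp
  also have "\<dots> = (\<Sum>V\<in>Pow {0..<m}. z ^ card V * (\<Sum>p | p permutes V. of_int (sign p) *
         (\<Sum>f\<in>V \<rightarrow>\<^sub>E {0..<n}. \<Prod>j\<in>V. A $$ (j, f j) * cnj (A $$ (p j, f j)))))"
  proof (rule sum.cong[OF refl])
    fix V assume "V \<in> Pow {0..<m}"
    then have V: "finite V" by (auto intro: finite_subset)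
    show "perm_det V (\<lambda>i j. z * ?G i j) = z ^ card V * (\<Sum>p | p permutes V. of_int (sign p) *
         (\<Sum>f\<in>V \<rightarrow>\<^sub>E {0..<n}. \<Prod>j\<in>V. A $$ (j, f j) * cnj (A $$ (p j, f j))))"
      by (simp add: perm_det_scale[OF V] perm_det_gram[OF V])
  qed
  finally show ?thesis .
qed

lemma one_plus_gram_quadratic_form:
  assumes A: "A \<in> carrier_mat m n" and v: "v \<in> carrier_vec m"
  shows "(\<Sum>i = 0..<m. cnj (v $ i) * ((1\<^sub>m m + z \<cdot>\<^sub>m (A * herm A)) *\<^sub>v v) $ i)
    = (\<Sum>i = 0..<m. cnj (v $ i) * v $ i)
      + z * (\<Sum>l = 0..<n. cnj (\<Sum>j = 0..<m. cnj (A $$ (j, l)) * v $ j) * (\<Sum>j = 0..<m. cnj (A $$ (j, l)) * v $ j))"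
proof -
  let ?P = "1\<^sub>m m + z \<cdot>\<^sub>m (A * herm A)"
  have "(?P *\<^sub>v v) $ i = v $ i + z * (\<Sum>l = 0..<n. A $$ (i, l) * (\<Sum>j = 0..<m. cnj (A $$ (j, l)) * v $ j))"
    if i: "i < m" for i
  proof -
    have "(?P *\<^sub>v v) $ i = (\<Sum>j = 0..<m. ?P $$ (i, j) * v $ j)"
      using A v i by (auto simp: herm_def scalar_prod_def intro!: sum.cong)
    also have "\<dots> = (\<Sum>j = 0..<m. (if i = j then 1 else 0) * v $ j)
                     + z * (\<Sum>j = 0..<m. \<Sum>l = 0..<n. A $$ (i, l) * cnj (A $$ (j, l)) * v $ j)"
      using A i by (simp add: one_plus_gram_entry distrib_right sum.distrib sum_distrib_left
                              sum_distrib_right mult.assoc)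
    also have "(\<Sum>j = 0..<m. (if i = j then 1 else 0) * v $ j) = v $ i"
      using i by (simp add: if_distrib[of "\<lambda>x. x * _"] cong: if_cong)
    also have "(\<Sum>j = 0..<m. \<Sum>l = 0..<n. A $$ (i, l) * cnj (A $$ (j, l)) * v $ j)
             = (\<Sum>l = 0..<n. A $$ (i, l) * (\<Sum>j = 0..<m. cnj (A $$ (j, l)) * v $ j))"
      by (subst sum.swap) (simp add: sum_distrib_left mult.assoc)
    finally show ?thesis using i by simp
  qed
  then have "(\<Sum>i = 0..<m. cnj (v $ i) * (?P *\<^sub>v v) $ i)
      = (\<Sum>i = 0..<m. cnj (v $ i) * v $ i)
        + z * (\<Sum>i = 0..<m. \<Sum>l = 0..<n. cnj (v $ i) * A $$ (i, l) * (\<Sum>j = 0..<m. cnj (A $$ (j, l)) * v $ j))"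
    by (simp add: distrib_left sum.distrib sum_distrib_left mult_ac)
  also have "(\<Sum>i = 0..<m. \<Sum>l = 0..<n. cnj (v $ i) * A $$ (i, l) * (\<Sum>j = 0..<m. cnj (A $$ (j, l)) * v $ j))
      = (\<Sum>l = 0..<n. (\<Sum>i = 0..<m. cnj (v $ i) * A $$ (i, l)) * (\<Sum>j = 0..<m. cnj (A $$ (j, l)) * v $ j))"
    by (subst sum.swap) (simp add: sum_distrib_right)
  also have "\<dots> = (\<Sum>l = 0..<n. cnj (\<Sum>j = 0..<m. cnj (A $$ (j, l)) * v $ j) * (\<Sum>j = 0..<m. cnj (A $$ (j, l)) * v $ j))"
    by (simp add: cnj_sum mult.commute)
  finally show ?thesis .
qed

(* Every eigenvalue of I + c A A^H with c >= 0 is real and at least 1 (Rayleigh quotient). *)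
lemma eigenvalue_one_plus_gram:
  assumes A: "A \<in> carrier_mat m n" and c: "0 \<le> c"
    and ev: "eigenvalue (1\<^sub>m m + complex_of_real c \<cdot>\<^sub>m (A * herm A)) a"
  shows "\<exists>r\<ge>1. a = complex_of_real r"
proof -
  let ?P = "1\<^sub>m m + complex_of_real c \<cdot>\<^sub>m (A * herm A)"
  have "?P \<in> carrier_mat m m" using A by (simp add: herm_def)
  with ev obtain v where v: "v \<in> carrier_vec m" "v \<noteq> 0\<^sub>v m" "?P *\<^sub>v v = a \<cdot>\<^sub>v v"
    unfolding eigenvalue_def eigenvector_def by auto
  define N where "N = (\<Sum>i = 0..<m. (cmod (v $ i))\<^sup>2)"
  define S where "S = (\<Sum>l = 0..<n. (cmod (\<Sum>j = 0..<m. cnj (A $$ (j, l)) * v $ j))\<^sup>2)"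
  have N_pos: "N > 0"
  proof -
    from v(1,2) obtain i where i: "i < m" "v $ i \<noteq> 0" by (auto simp: vec_eq_iff)
    then have "0 < (cmod (v $ i))\<^sup>2" by simp
    also have "\<dots> \<le> N" unfolding N_def using i by (intro member_le_sum) auto
    finally show ?thesis .
  qed
  have S_nonneg: "S \<ge> 0" unfolding S_def by (intro sum_nonneg) auto
  have N_eq: "(\<Sum>i = 0..<m. cnj (v $ i) * v $ i) = complex_of_real N"
    unfolding N_def of_real_sum complex_norm_square by (simp add: mult.commute)
  have S_eq: "(\<Sum>l = 0..<n. cnj (\<Sum>j = 0..<m. cnj (A $$ (j, l)) * v $ j) * (\<Sum>j = 0..<m. cnj (A $$ (j, l)) * v $ j))
      = complex_of_real S"
    unfolding S_def of_real_sum complex_norm_square by (simp add: mult.commute)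
  have "a * complex_of_real N = (\<Sum>i = 0..<m. cnj (v $ i) * (?P *\<^sub>v v) $ i)"
    using v(1,3) by (simp add: N_eq[symmetric] sum_distrib_left ac_simps)
  also have "\<dots> = complex_of_real (N + c * S)"
    unfolding one_plus_gram_quadratic_form[OF A v(1)] N_eq S_eq by simp
  finally have "a = complex_of_real ((N + c * S) / N)" using N_pos by (simp add: field_simps)
  moreover have "(N + c * S) / N \<ge> 1" using N_pos S_nonneg c by (simp add: field_simps)
  ultimately show ?thesis by blast
qed

lemma det_eq_prod_eigenvalues:
  fixes B :: "complex mat"
  assumes B: "B \<in> carrier_mat k k"
  shows "\<exists>as. det B = prod_list as \<and> (\<forall>a\<in>set as. eigenvalue B a)"
proof -
  obtain as where as: "char_poly B = (\<Prod>a\<leftarrow>as. [:- a, 1:])" "length as = k"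
    using char_poly_factorized[OF B] by blast
  have "- B = (-1) \<cdot>\<^sub>m B" using B by (intro eq_matI) auto
  then have "(-1) ^ k * det B = det (- B)" using B by simp
  also have "\<dots> = poly (char_poly B) 0"
  proof -
    have "char_matrix B 0 = B" unfolding char_matrix_def using B by (intro eq_matI) auto
    then show ?thesis using char_poly_matrix[OF B, of 0] by simp
  qed
  also have "\<dots> = (-1) ^ k * prod_list as"
    unfolding as(1) as(2)[symmetric] by (induction as) auto
  finally have "det B = prod_list as" by simp
  moreover have "eigenvalue B a" if "a \<in> set as" for a
    unfolding eigenvalue_root_char_poly[OF B] as(1) using that by (induction as) auto
  ultimately show ?thesis by blast
qed

lemma det_one_plus_gram_ge1:
  assumes A: "A \<in> carrier_mat m n" and c: "0 \<le> c"
  shows "\<exists>r\<ge>1. det (1\<^sub>m m + complex_of_real c \<cdot>\<^sub>m (A * herm A)) = complex_of_real r"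
proof -
  let ?P = "1\<^sub>m m + complex_of_real c \<cdot>\<^sub>m (A * herm A)"
  have "?P \<in> carrier_mat m m" using A by (simp add: herm_def)
  then obtain as where det: "det ?P = prod_list as" and ev: "\<forall>a\<in>set as. eigenvalue ?P a"
    using det_eq_prod_eigenvalues by blast
  have "\<forall>a\<in>set as. \<exists>r\<ge>1. a = complex_of_real r"
    using ev eigenvalue_one_plus_gram[OF A c] by blast
  then have "\<exists>r\<ge>1. prod_list as = complex_of_real r"
  proof (induction as)
    case Nil
    then show ?case by (intro exI[of _ 1]) simp
  next
    case (Cons a as)
    then obtain q r where "q \<ge> 1" "a = complex_of_real q" "r \<ge> 1" "prod_list as = complex_of_real r"
      by auto
    moreover have "1 * 1 \<le> q * r" using \<open>q \<ge> 1\<close> \<open>r \<ge> 1\<close> by (intro mult_mono) auto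
    ultimately show ?case by (intro exI[of _ "q * r"]) auto
  qed
  then show ?thesis unfolding det .
qed

definition noise :: "(nat \<times> nat \<Rightarrow> real) \<Rightarrow> nat \<Rightarrow> nat \<Rightarrow> complex" where
  "noise Phi r l = 1 + \<i> * complex_of_real (Phi (r, l))"

lemma Hhat_carrier: "Hhat m n g h Phi \<in> carrier_mat m n"
  by (simp add: Hhat_def)

lemma Hhat_entry: "i < m \<Longrightarrow> l < n \<Longrightarrow> Hhat m n g h Phi $$ (i, l) = g i * h l * noise Phi i l"
  by (simp add: Hhat_def noise_def)

lemma prod_unit_phases:
  assumes V: "finite V" and p: "p permutes V" and g: "\<forall>i\<in>V. cmod (g i) = 1"
  shows "(\<Prod>j\<in>V. g j * cnj (g (p j))) = 1"
proof -
  have "(\<Prod>j\<in>V. cnj (g (p j))) = (\<Prod>j\<in>V. cnj (g j))"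
    using prod.permute[OF p, of "\<lambda>j. cnj (g j)"] by (simp add: o_def)
  then have "(\<Prod>j\<in>V. g j * cnj (g (p j))) = (\<Prod>j\<in>V. g j * cnj (g j))"
    by (simp add: prod.distrib)
  also have "\<dots> = 1"
    using g by (intro prod.neutral) (simp add: complex_norm_square[symmetric])
  finally show ?thesis .
qed

lemma Hhat_gram_product:
  assumes V: "V \<subseteq> {0..<m}" and p: "p permutes V" and f: "f \<in> V \<rightarrow>\<^sub>E {0..<n}"
    and g: "\<forall>i<m. cmod (g i) = 1" and h: "\<forall>j<n. cmod (h j) = 1"
  shows "(\<Prod>j\<in>V. Hhat m n g h Phi $$ (j, f j) * cnj (Hhat m n g h Phi $$ (p j, f j)))
       = (\<Prod>j\<in>V. noise Phi j (f j) * cnj (noise Phi (p j) (f j)))"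
proof -
  have finV: "finite V" using V finite_subset by blast
  have "(\<Prod>j\<in>V. Hhat m n g h Phi $$ (j, f j) * cnj (Hhat m n g h Phi $$ (p j, f j)))
     = (\<Prod>j\<in>V. (g j * cnj (g (p j))) * (h (f j) * cnj (h (f j)))
                 * (noise Phi j (f j) * cnj (noise Phi (p j) (f j))))"
  proof (rule prod.cong[OF refl])
    fix j assume j: "j \<in> V"
    then have "p j \<in> V" using p by (simp add: permutes_in_image)
    then have "j < m" "p j < m" "f j < n" using j V f by auto
    then show "Hhat m n g h Phi $$ (j, f j) * cnj (Hhat m n g h Phi $$ (p j, f j))
      = (g j * cnj (g (p j))) * (h (f j) * cnj (h (f j))) * (noise Phi j (f j) * cnj (noise Phi (p j) (f j)))"
      by (simp add: Hhat_entry)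
  qed
  also have "\<dots> = (\<Prod>j\<in>V. g j * cnj (g (p j))) * (\<Prod>j\<in>V. h (f j) * cnj (h (f j)))
                 * (\<Prod>j\<in>V. noise Phi j (f j) * cnj (noise Phi (p j) (f j)))"
    by (simp add: prod.distrib)
  also have "(\<Prod>j\<in>V. g j * cnj (g (p j))) = 1"
    using g V by (intro prod_unit_phases[OF finV p]) auto
  also have "(\<Prod>j\<in>V. h (f j) * cnj (h (f j))) = 1"
  proof (rule prod.neutral, rule ballI)
    fix j assume "j \<in> V"
    then have "cmod (h (f j)) = 1" using h f by (auto simp: PiE_iff)
    then show "h (f j) * cnj (h (f j)) = 1" by (simp add: complex_norm_square[symmetric])
  qed
  finally show ?thesis by simp
qed

lemma det_Hhat_expansion:
  assumes g: "\<forall>i<m. cmod (g i) = 1" and h: "\<forall>j<n. cmod (h j) = 1"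
  shows "det (1\<^sub>m m + z \<cdot>\<^sub>m (Hhat m n g h Phi * herm (Hhat m n g h Phi)))
    = (\<Sum>V\<in>Pow {0..<m}. z ^ card V * (\<Sum>p | p permutes V. of_int (sign p) *
         (\<Sum>f\<in>V \<rightarrow>\<^sub>E {0..<n}. \<Prod>j\<in>V. noise Phi j (f j) * cnj (noise Phi (p j) (f j)))))"
  unfolding det_one_plus_gram[OF Hhat_carrier]
  by (intro sum.cong refl arg_cong2[where f = "(*)"] Hhat_gram_product[OF _ _ _ g h]) auto

abbreviation gaussian :: "real \<Rightarrow> real measure" where
  "gaussian s2 \<equiv> density lborel (normal_density 0 (sqrt s2))"

context
  fixes s2 :: real
  assumes s2: "0 < s2"
begin

lemma prob_space_gaussian: "prob_space (gaussian s2)"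
  using s2 by (intro prob_space_normal_density) simp

lemma prob_space_Phi_dist: "prob_space (Phi_dist s2 m n)"
  unfolding Phi_dist_def by (intro prob_space_PiM prob_space_gaussian)

lemma coordinate_measurable:
  "k \<in> {0..<m} \<times> {0..<n} \<Longrightarrow> (\<lambda>x. x k) \<in> measurable (Phi_dist s2 m n) (gaussian s2)"
  unfolding Phi_dist_def by (rule measurable_component_singleton)

lemma distr_coordinate:
  "k \<in> {0..<m} \<times> {0..<n} \<Longrightarrow> distr (Phi_dist s2 m n) (gaussian s2) (\<lambda>x. x k) = gaussian s2"
  unfolding Phi_dist_def by (intro distr_PiM_component prob_space_gaussian)

lemma coordinate_integral:
  fixes F :: "real \<Rightarrow> real"
  assumes k: "k \<in> {0..<m} \<times> {0..<n}" and F: "F \<in> borel_measurable borel"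
  shows "integrable (Phi_dist s2 m n) (\<lambda>x. F (x k))
           \<longleftrightarrow> integrable lborel (\<lambda>y. normal_density 0 (sqrt s2) y * F y)"
    and "integral\<^sup>L (Phi_dist s2 m n) (\<lambda>x. F (x k)) = (\<integral>y. normal_density 0 (sqrt s2) y * F y \<partial>lborel)"
proof -
  have F': "F \<in> borel_measurable (gaussian s2)" using F by simp
  show "integrable (Phi_dist s2 m n) (\<lambda>x. F (x k))
          \<longleftrightarrow> integrable lborel (\<lambda>y. normal_density 0 (sqrt s2) y * F y)"
    using integrable_distr_eq[OF coordinate_measurable[OF k] F'] F
    by (simp add: distr_coordinate[OF k] integrable_density)
  show "integral\<^sup>L (Phi_dist s2 m n) (\<lambda>x. F (x k)) = (\<integral>y. normal_density 0 (sqrt s2) y * F y \<partial>lborel)"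
    using integral_distr[OF coordinate_measurable[OF k] F'] F
    by (simp add: distr_coordinate[OF k] integral_density)
qed

lemma coordinate_mean:
  assumes k: "k \<in> {0..<m} \<times> {0..<n}"
  shows "integrable (Phi_dist s2 m n) (\<lambda>x. x k)" and "integral\<^sup>L (Phi_dist s2 m n) (\<lambda>x. x k) = 0"
  using coordinate_integral[OF k, of "\<lambda>y. y"] s2
    integrable_normal_moment_nz_1[where \<mu> = 0 and \<sigma> = "sqrt s2"]
    integral_normal_moment_nz_1[where \<mu> = 0 and \<sigma> = "sqrt s2"]
  by simp_all

lemma coordinate_variance:
  assumes k: "k \<in> {0..<m} \<times> {0..<n}"
  shows "integrable (Phi_dist s2 m n) (\<lambda>x. (x k)\<^sup>2)" and "integral\<^sup>L (Phi_dist s2 m n) (\<lambda>x. (x k)\<^sup>2) = s2"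
proof -
  have "has_bochner_integral lborel (\<lambda>y. normal_density 0 (sqrt s2) y * (y - 0) ^ (2 * 1))
          (fact (2 * 1) / ((2 / (sqrt s2)\<^sup>2) ^ 1 * fact 1))"
    using s2 by (intro normal_moment_even) simp
  then have "integrable lborel (\<lambda>y. normal_density 0 (sqrt s2) y * y\<^sup>2)"
    and "(\<integral>y. normal_density 0 (sqrt s2) y * y\<^sup>2 \<partial>lborel) = s2"
    using s2 by (simp_all add: has_bochner_integral_iff)
  then show "integrable (Phi_dist s2 m n) (\<lambda>x. (x k)\<^sup>2)"
    and "integral\<^sup>L (Phi_dist s2 m n) (\<lambda>x. (x k)\<^sup>2) = s2"
    using coordinate_integral[OF k, of "\<lambda>y. y\<^sup>2"] by simp_all
qed

lemma coordinates_indep: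
  assumes K: "{0..<m} \<times> {0..<n} \<noteq> ({} :: (nat \<times> nat) set)"
  shows "prob_space.indep_vars (Phi_dist s2 m n) (\<lambda>_. borel) (\<lambda>k x. x k) ({0..<m} \<times> {0..<n})"
proof -
  let ?K = "{0..<m} \<times> {0..<n}"
  let ?M = "Phi_dist s2 m n"
  interpret prob_space ?M by (rule prob_space_Phi_dist)
  have rv: "random_variable (gaussian s2) (\<lambda>x. x k)" for k
  proof (cases "k \<in> ?K")
    case True
    then show ?thesis by (rule coordinate_measurable)
  next
    case False
    obtain a b where k: "k = (a, b)" by (cases k)
    have "(\<lambda>x. undefined) \<in> measurable ?M (gaussian s2)" by simp
    then show ?thesis
      by (rule measurable_cong[THEN iffD1, rotated])
         (use False k in \<open>auto simp: Phi_dist_def space_PiM PiE_def extensional_def\<close>)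
  qed
  have "indep_vars (\<lambda>_. gaussian s2) (\<lambda>k x. x k) ?K"
  proof (subst indep_vars_iff_distr_eq_PiM[OF K rv])
    have "distr ?M (\<Pi>\<^sub>M i\<in>?K. gaussian s2) (\<lambda>x. \<lambda>i\<in>?K. x i) = distr ?M ?M (\<lambda>x. x)"
      by (rule distr_cong) (auto simp: Phi_dist_def space_PiM PiE_def extensional_def restrict_def)
    also have "\<dots> = (\<Pi>\<^sub>M i\<in>?K. distr ?M (gaussian s2) (\<lambda>x. x i))"
      unfolding Phi_dist_def by (auto intro!: PiM_cong simp: distr_coordinate[unfolded Phi_dist_def])
    finally show "distr ?M (\<Pi>\<^sub>M i\<in>?K. gaussian s2) (\<lambda>x. \<lambda>i\<in>?K. x i)
        = (\<Pi>\<^sub>M i\<in>?K. distr ?M (gaussian s2) (\<lambda>x. x i))" .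
  qed
  from indep_vars_compose2[OF this, of "\<lambda>_ x. x" "\<lambda>_. borel"]
  show ?thesis by (simp add: measurable_ident_sets)
qed

(* Second moment of two noise factors in the same row: E[(1 + j x)(1 - j y)] = 1 + E[x y]. *)
lemma noise_pair_expectation:
  assumes r: "r < m" and a: "a < n" and b: "b < n"
  shows "integrable (Phi_dist s2 m n) (\<lambda>w. noise w r a * cnj (noise w r b))"
    and "integral\<^sup>L (Phi_dist s2 m n) (\<lambda>w. noise w r a * cnj (noise w r b))
           = (if a = b then 1 + complex_of_real s2 else 1)"
proof -
  let ?M = "Phi_dist s2 m n"
  interpret prob_space ?M by (rule prob_space_Phi_dist)
  have ka: "(r, a) \<in> {0..<m} \<times> {0..<n}" and kb: "(r, b) \<in> {0..<m} \<times> {0..<n}"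
    using r a b by auto
  have cov: "integrable ?M (\<lambda>w. w (r, a) * w (r, b))
     \<and> integral\<^sup>L ?M (\<lambda>w. w (r, a) * w (r, b)) = (if a = b then s2 else 0)"
  proof (cases "a = b")
    case True
    then show ?thesis using coordinate_variance[OF ka] by (simp add: power2_eq_square)
  next
    case False
    let ?I = "{(r, a), (r, b)}"
    have ind: "indep_vars (\<lambda>_. borel) (\<lambda>k x. x k) ?I"
      by (rule indep_vars_subset[OF coordinates_indep]) (use ka kb in auto)
    have int: "\<And>k. k \<in> ?I \<Longrightarrow> integrable ?M (\<lambda>x. x k)" using coordinate_mean ka kb by auto
    have "integrable ?M (\<lambda>w. \<Prod>k\<in>?I. w k)"
      by (rule indep_vars_integrable) (use ind int in auto)
    moreover have "(\<integral>w. (\<Prod>k\<in>?I. w k) \<partial>?M) = (\<Prod>k\<in>?I. \<integral>w. w k \<partial>?M)"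
      by (rule indep_vars_lebesgue_integral) (use ind int in auto)
    ultimately show ?thesis using False coordinate_mean(2)[OF ka] by simp
  qed
  have expand: "(\<lambda>w. noise w r a * cnj (noise w r b))
      = (\<lambda>w. complex_of_real (1 + w (r, a) * w (r, b)) + \<i> * complex_of_real (w (r, a) - w (r, b)))"
    by (simp add: noise_def algebra_simps complex_eq_iff fun_eq_iff)
  have i1: "integrable ?M (\<lambda>w. 1 + w (r, a) * w (r, b))" using cov by simp
  have i2: "integrable ?M (\<lambda>w. w (r, a) - w (r, b))"
    using coordinate_mean(1)[OF ka] coordinate_mean(1)[OF kb] by simp
  have i12: "integrable ?M (\<lambda>w. complex_of_real (1 + w (r, a) * w (r, b)))"
    "integrable ?M (\<lambda>w. \<i> * complex_of_real (w (r, a) - w (r, b)))"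
    by (rule integrable_of_real[OF i1], rule integrable_mult_right[OF integrable_of_real[OF i2]])
  then show "integrable ?M (\<lambda>w. noise w r a * cnj (noise w r b))"
    unfolding expand by (rule Bochner_Integration.integrable_add)
  have "integral\<^sup>L ?M (\<lambda>w. 1 + w (r, a) * w (r, b)) = 1 + (if a = b then s2 else 0)"
    using cov by (simp add: prob_space)
  moreover have "integral\<^sup>L ?M (\<lambda>w. w (r, a) - w (r, b)) = 0"
    using coordinate_mean[OF ka] coordinate_mean[OF kb] by simp
  ultimately show "integral\<^sup>L ?M (\<lambda>w. noise w r a * cnj (noise w r b))
      = (if a = b then 1 + complex_of_real s2 else 1)"
    unfolding expand Bochner_Integration.integral_add[OF i12]
    by (simp only: integral_mult_right_zero integral_complex_of_real) simp
qed

(* Rows of Phi are independent, so the expectation of a product of one noise pair per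
   row factorises into the pair moments. *)
lemma noise_rows_expectation:
  assumes V: "V \<subseteq> {0..<m}" and f: "\<And>r. r \<in> V \<Longrightarrow> f r < n" and f': "\<And>r. r \<in> V \<Longrightarrow> f' r < n"
  shows "integrable (Phi_dist s2 m n) (\<lambda>w. \<Prod>r\<in>V. noise w r (f r) * cnj (noise w r (f' r)))"
    and "integral\<^sup>L (Phi_dist s2 m n) (\<lambda>w. \<Prod>r\<in>V. noise w r (f r) * cnj (noise w r (f' r)))
           = (\<Prod>r\<in>V. if f r = f' r then 1 + complex_of_real s2 else 1)"
proof -
  let ?M = "Phi_dist s2 m n"
  let ?K = "{0..<m} \<times> {0..<n}"
  interpret prob_space ?M by (rule prob_space_Phi_dist)
  have finV: "finite V" using V finite_subset by blast
  have rm: "\<And>r. r \<in> V \<Longrightarrow> r < m" using V by auto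
  define Row where "Row r = {r} \<times> {0..<n}" for r :: nat
  define Y where "Y r y = noise y r (f r) * cnj (noise y r (f' r))" for r and y :: "nat \<times> nat \<Rightarrow> real"
  have Y_row: "(\<lambda>w. Y r (restrict w (Row r))) = (\<lambda>w. noise w r (f r) * cnj (noise w r (f' r)))"
    if "r \<in> V" for r
    using f[OF that] f'[OF that] by (simp add: Y_def noise_def Row_def fun_eq_iff)
  have int: "integrable ?M (\<lambda>w. Y r (restrict w (Row r)))"
    and exp: "integral\<^sup>L ?M (\<lambda>w. Y r (restrict w (Row r))) = (if f r = f' r then 1 + complex_of_real s2 else 1)"
    if "r \<in> V" for r
    using noise_pair_expectation[OF rm f f', OF that that that] Y_row[OF that] by simp_all
  have ind: "indep_vars (\<lambda>_. borel) (\<lambda>r w. Y r (restrict w (Row r))) V"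
  proof (cases "V = {}")
    case True
    then show ?thesis by (simp add: indep_vars_def indep_sets_def)
  next
    case False
    then obtain r0 where "r0 \<in> V" by auto
    then have K: "?K \<noteq> {}" using rm f by fastforce
    have rows: "indep_vars (\<lambda>r. PiM (Row r) (\<lambda>_. borel)) (\<lambda>r w. restrict w (Row r)) V"
      by (rule indep_vars_restrict[OF coordinates_indep[OF K]])
         (use rm in \<open>auto simp: Row_def disjoint_family_on_def\<close>)
    have "Y r \<in> borel_measurable (PiM (Row r) (\<lambda>_. borel))" if r: "r \<in> V" for r
    proof -
      have "(\<lambda>y. y (r, f r)) \<in> borel_measurable (PiM (Row r) (\<lambda>_. borel :: real measure))"
        and "(\<lambda>y. y (r, f' r)) \<in> borel_measurable (PiM (Row r) (\<lambda>_. borel :: real measure))"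
        using f[OF r] f'[OF r] by (auto intro!: measurable_component_singleton simp: Row_def)
      then show ?thesis unfolding Y_def noise_def by simp
    qed
    then show ?thesis by (rule indep_vars_compose2[OF rows])
  qed
  have prod_Y: "(\<lambda>w. \<Prod>r\<in>V. noise w r (f r) * cnj (noise w r (f' r)))
      = (\<lambda>w. \<Prod>r\<in>V. Y r (restrict w (Row r)))"
    using Y_row by (auto simp: fun_eq_iff intro!: prod.cong dest: fun_cong)
  show "integrable ?M (\<lambda>w. \<Prod>r\<in>V. noise w r (f r) * cnj (noise w r (f' r)))"
    unfolding prod_Y by (rule indep_vars_integrable[OF finV ind int])
  show "integral\<^sup>L ?M (\<lambda>w. \<Prod>r\<in>V. noise w r (f r) * cnj (noise w r (f' r)))
      = (\<Prod>r\<in>V. if f r = f' r then 1 + complex_of_real s2 else 1)"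
    unfolding prod_Y
    by (subst indep_vars_lebesgue_integral[OF finV ind int]) (auto intro!: prod.cong simp: exp)
qed

(* The expectation of a term of the Leibniz expansion is the label kernel evaluated along
   the permutation; the second factors are regrouped row by row via p^-1. *)
lemma noise_gram_expectation:
  assumes V: "V \<subseteq> {0..<m}" and p: "p permutes V" and f: "f \<in> V \<rightarrow>\<^sub>E {0..<n}"
  shows "has_bochner_integral (Phi_dist s2 m n)
           (\<lambda>w. \<Prod>j\<in>V. noise w j (f j) * cnj (noise w (p j) (f j)))
           (\<Prod>j\<in>V. if f j = f (p j) then 1 + complex_of_real s2 else 1)"
proof -
  let ?q = "Hilbert_Choice.inv p"
  have finV: "finite V" using V finite_subset by blast
  have qV: "r \<in> V \<Longrightarrow> ?q r \<in> V" for r using p by (simp add: permutes_in_image permutes_inv)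
  have regroup: "(\<Prod>j\<in>V. a j * c (p j)) = (\<Prod>r\<in>V. a r * c r)" for a c :: "nat \<Rightarrow> complex"
    using prod.permute[OF p, of c] by (simp add: prod.distrib o_def)
  have "(\<lambda>w. \<Prod>j\<in>V. noise w j (f j) * cnj (noise w (p j) (f j)))
      = (\<lambda>w. \<Prod>r\<in>V. noise w r (f r) * cnj (noise w r (f (?q r))))"
    using regroup[of "\<lambda>j. noise _ j (f j)" "\<lambda>r. cnj (noise _ r (f (?q r)))"]
    by (simp add: permutes_inverses(2)[OF p])
  moreover have "(\<Prod>r\<in>V. if f r = f (?q r) then 1 + complex_of_real s2 else 1)
      = (\<Prod>j\<in>V. if f j = f (p j) then 1 + complex_of_real s2 else 1)"
    using prod.permute[OF p, of "\<lambda>r. if f r = f (?q r) then 1 + complex_of_real s2 else 1"]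
    by (simp add: o_def permutes_inverses(2)[OF p] eq_commute)
  moreover have "f r < n" "f (?q r) < n" if "r \<in> V" for r
    using f qV[OF that] that by auto
  ultimately show ?thesis
    using noise_rows_expectation[OF V, where f = f and f' = "\<lambda>r. f (?q r)"] by (simp add: has_bochner_integral_iff)
qed

end

lemma expected_det_Hhat:
  assumes s2: "0 < s2" and g: "\<forall>i<m. cmod (g i) = 1" and h: "\<forall>j<n. cmod (h j) = 1"
  shows "has_bochner_integral (Phi_dist s2 m n)
     (\<lambda>Phi. det (1\<^sub>m m + z \<cdot>\<^sub>m (Hhat m n g h Phi * herm (Hhat m n g h Phi))))
     (\<Sum>k=0..m. of_nat (m choose k) * z ^ k * of_nat ((n choose k) * fact k)
                * (complex_of_real s2 ^ k + of_nat k * complex_of_real s2 ^ (k - 1)))"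
  unfolding det_Hhat_expansion[OF g h] label_kernel_expansion[symmetric]
  by (intro has_bochner_integral_sum has_bochner_integral_mult_right noise_gram_expectation[OF s2])
     auto

(* Jensen's inequality for the logarithm, for random variables bounded below by 1; the
   lower bound also yields integrability of log X, since 0 <= log_b X <= X / ln b. *)
lemma (in prob_space) expectation_log_le_log_expectation:
  fixes X :: "'a \<Rightarrow> real"
  assumes X: "integrable M X" and X_ge: "\<And>x. x \<in> space M \<Longrightarrow> 1 \<le> X x" and b: "1 < b"
  shows "expectation (\<lambda>x. log b (X x)) \<le> log b (expectation X)"
proof -
  have log_bound: "norm (log b y) \<le> norm (y / ln b)" if y: "1 \<le> y" for y :: real
  proof -
    have "ln y \<le> y - 1" using y by (intro ln_le_minus_one) simp
    then have "ln y / ln b \<le> y / ln b" using b by (intro divide_right_mono) auto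
    then show ?thesis using y b by (simp add: log_def abs_of_nonneg)
  qed
  have int_log: "integrable M (\<lambda>x. log b (X x))"
  proof (rule Bochner_Integration.integrable_bound)
    show "integrable M (\<lambda>x. X x / ln b)" using X by simp
    show "(\<lambda>x. log b (X x)) \<in> borel_measurable M" using borel_measurable_integrable[OF X] by simp
    show "AE x in M. norm (log b (X x)) \<le> norm (X x / ln b)"
      by (intro AE_I2 log_bound X_ge)
  qed
  have pos: "AE x in M. X x \<in> {0<..}"
    using X_ge by (intro AE_I2) (fastforce intro: less_le_trans[OF zero_less_one])
  have "- log b (expectation X) \<le> expectation (\<lambda>x. - log b (X x))"
    using int_log minus_log_convex[OF b]
    by (intro jensens_inequality[OF X pos, where a = 0]) auto
  then show ?thesis by simp
qed

lemma expected_det_real_form: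
  fixes c s :: real
  assumes s: "0 < s"
  shows "Re (\<Sum>k=0..m. of_nat (m choose k) * complex_of_real c ^ k * of_nat ((n choose k) * fact k)
                * (complex_of_real s ^ k + of_nat k * complex_of_real s ^ (k - 1)))
    = 1 + (\<Sum>k=1..m. c ^ k * s ^ k * real (m choose k) * real (n choose k) * fact k * (1 + real k / s))"
proof -
  have "Re (\<Sum>k=0..m. of_nat (m choose k) * complex_of_real c ^ k * of_nat ((n choose k) * fact k)
                * (complex_of_real s ^ k + of_nat k * complex_of_real s ^ (k - 1)))
      = (\<Sum>k=0..m. real (m choose k) * c ^ k * real ((n choose k) * fact k) * (s ^ k + real k * s ^ (k - 1)))"
    by (simp add: Re_sum)
  also have "\<dots> = 1 + (\<Sum>k=1..m. real (m choose k) * c ^ k * real ((n choose k) * fact k) * (s ^ k + real k * s ^ (k - 1)))"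
    by (simp add: sum.atLeast_Suc_atMost)
  also have "(\<Sum>k=1..m. real (m choose k) * c ^ k * real ((n choose k) * fact k) * (s ^ k + real k * s ^ (k - 1)))
      = (\<Sum>k=1..m. c ^ k * s ^ k * real (m choose k) * real (n choose k) * fact k * (1 + real k / s))"
  proof (rule sum.cong[OF refl])
    fix k :: nat assume "k \<in> {1..m}"
    then have "s ^ k + real k * s ^ (k - 1) = s ^ k * (1 + real k / s)"
      using s by (cases k) (simp_all add: field_simps)
    then show "real (m choose k) * c ^ k * real ((n choose k) * fact k) * (s ^ k + real k * s ^ (k - 1))
      = c ^ k * s ^ k * real (m choose k) * real (n choose k) * fact k * (1 + real k / s)"
      by (simp add: mult_ac)
  qed
  finally show ?thesis .
qed

theorem theorem9:
  fixes rho s2 :: real and MR MT :: nat and g h :: "nat \<Rightarrow> complex"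
  assumes "rho > 0" and "s2 > 0" and "MR \<le> MT"
    and "\<forall>i<MR. cmod (g i) = 1" and "\<forall>j<MT. cmod (h j) = 1"
  shows "(\<integral>Phi. cap_integrand rho MR MT g h Phi \<partial>Phi_dist s2 MR MT)
     \<le> log 2 (1 + (\<Sum>n=1..MR. (rho / real MT) ^ n * s2 ^ n * real (MR choose n)
                  * real (MT choose n) * fact n * (1 + real n / s2)))"
proof -
  note rho = assms(1) and s2 = assms(2) and g = assms(4) and h = assms(5)
  define c where "c = rho / real MT"
  define D where "D Phi = Re (det (1\<^sub>m MR + complex_of_real c \<cdot>\<^sub>m (Hhat MR MT g h Phi * herm (Hhat MR MT g h Phi))))"
    for Phi
  interpret prob_space "Phi_dist s2 MR MT" by (rule prob_space_Phi_dist[OF s2])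
  have D_ge: "1 \<le> D Phi" for Phi
    using det_one_plus_gram_ge1[OF Hhat_carrier, of c MR MT g h Phi] rho
    unfolding D_def c_def by force
  have "has_bochner_integral (Phi_dist s2 MR MT) D
      (1 + (\<Sum>n=1..MR. c ^ n * s2 ^ n * real (MR choose n) * real (MT choose n) * fact n * (1 + real n / s2)))"
    unfolding D_def expected_det_real_form[OF s2, symmetric]
    by (intro has_bochner_integral_Re expected_det_Hhat[OF s2 g h])
  then have "expectation (\<lambda>Phi. log 2 (D Phi))
      \<le> log 2 (1 + (\<Sum>n=1..MR. c ^ n * s2 ^ n * real (MR choose n) * real (MT choose n) * fact n * (1 + real n / s2)))"
    using expectation_log_le_log_expectation[of D 2] D_ge by (auto simp: has_bochner_integral_iff)
  then show ?thesis unfolding cap_integrand_def D_def c_def .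
qed

end
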